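(* Let $N\ge 2$ and let $s_0,\dots,s_{N-1}$ be independent complex random variables with $\mathbb{E}[s_n]=0$, $\mathbb{E}[|s_n|^2]=1$ and kurtosis $\mu_{4,n}=\mathbb{E}[|s_n|^4]$ (finite). Let $P_0,\dots,P_{N-1}\ge 0$ be deterministic, $\mathbf P=\mathrm{diag}(\sqrt{P_0},\dots,\sqrt{P_{N-1}})$, $\mathbf s=[s_0,\dots,s_{N-1}]^T$, and $\mathbf x=\mathbf F_N^H\mathbf P\mathbf s$, where $\mathbf F_N$ is the unitary $N$-point DFT matrix, i.e. $x[t]=\frac{1}{\sqrt N}\sum_{n=0}^{N-1}\sqrt{P_n}\,s_n e^{j\frac{2\pi}{N}tn}$, $t=0,\dots,N-1$. For $k=0,\dots,N-1$ let $$\mathbf J_k=\begin{bmatrix}\mathbf 0_{(N-k)\times k} & \mathbf I_{N-k}\\ \mathbf I_k & \mathbf 0_{k\times(N-k)}\end{bmatrix}$$ be the $N\times N$ cyclic shift matrix and $r_k=\mathbf x^H\mathbf J_k\mathbf x$. Define the expected sidelobe level $\mathrm{ESL}=\frac{1}{N-1}\sum_{k=1}^{N-1}\mathbb{E}[|r_k|^2]$. Then $$\mathrm{ESL}=\frac{1}{N-1}\left(\sum_{n=0}^{N-1}\big[(N-1)\mu_{4,n}+1\big]P_n^2-\Big(\sum_{n=0}^{N-1}P_n\Big)^2\right).$$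
   Context: Here $\mathbf x$ is a single OFDM symbol with $N$ subcarriers, $s_n$ is the (random) data symbol on subcarrier $n$ drawn from some constellation, $P_n$ the power on subcarrier $n$, and $r_k$ the periodic autocorrelation of $\mathbf x$ at lag $k$. *)

theory Defs
  imports "HOL-Probability.Probability"
begin

definition ofdm_symbol :: "nat \<Rightarrow> (nat \<Rightarrow> real) \<Rightarrow> (nat \<Rightarrow> complex) \<Rightarrow> nat \<Rightarrow> complex" where
  "ofdm_symbol N P s t =
     complex_of_real (1 / sqrt (real N)) *
     (\<Sum>n<N. complex_of_real (sqrt (P n)) * s n *
        exp (2 * complex_of_real pi * \<i> * of_nat t * of_nat n / of_nat N))"

text \<open>Entry (i,j) (0-based) of the N x N cyclic shift matrix
  J_k = [[0_{(N-k) x k}, I_{N-k}], [I_k, 0_{k x (N-k)}]].\<close>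
definition cyc_shift :: "nat \<Rightarrow> nat \<Rightarrow> nat \<Rightarrow> nat \<Rightarrow> complex" where
  "cyc_shift N k i j =
     (if i < N - k then (if j = i + k then 1 else 0)
      else (if j + N = i + k then 1 else 0))"

definition acorr :: "nat \<Rightarrow> (nat \<Rightarrow> complex) \<Rightarrow> nat \<Rightarrow> complex" where
  "acorr N x k = (\<Sum>i<N. \<Sum>j<N. cnj (x i) * cyc_shift N k i j * x j)"

end

theory Submission
  imports Defs
begin

(* The DFT diagonalises cyclic shifts, so the periodic autocorrelation of x = F_N^H P s is
   the unnormalised DFT of the power spectrum: r_k = sum_n P_n |s_n|^2 w^(k n) with
   w = exp (2 pi j / N). Parseval then gives the sidelobe energy pointwise,
   sum_{k=1}^{N-1} |r_k|^2 = N sum_n P_n^2 |s_n|^4 - Y^2 with Y = sum_n P_n |s_n|^2 = r_0,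
   and by independence E[Y^2] = (sum_n P_n)^2 + sum_n P_n^2 (mu_{4,n} - 1), the last sum
   being the variances of the terms of Y. Only the moduli |s_n| enter. *)

definition dft_root :: "nat \<Rightarrow> complex" where
  "dft_root N = exp (2 * complex_of_real pi * \<i> / of_nat N)"

lemma dft_root_power: "dft_root N ^ j = exp (2 * complex_of_real pi * \<i> * of_nat j / of_nat N)"
proof -
  have "of_nat j * (2 * complex_of_real pi * \<i> / of_nat N) = 2 * complex_of_real pi * \<i> * of_nat j / of_nat N"
    by simp
  then show ?thesis
    unfolding dft_root_def by (metis exp_of_nat_mult)
qed

lemma norm_dft_root [simp]: "norm (dft_root N) = 1"
  unfolding dft_root_def by (simp add: norm_exp_eq_Re)

lemma dft_root_power_eq_iff:
  assumes "N > 0"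
  shows "dft_root N ^ i = dft_root N ^ j \<longleftrightarrow> i mod N = j mod N"
  using assms by (simp add: dft_root_power complex_root_unity_eq)

lemma dft_root_power_eq_1_iff:
  assumes "N > 0"
  shows "dft_root N ^ j = 1 \<longleftrightarrow> N dvd j"
  using assms by (simp add: dft_root_power complex_root_unity_eq_1)

lemma dft_orthogonality:
  assumes "n < N" "m < N"
  shows "(\<Sum>t<N. dft_root N ^ (t * n) * cnj (dft_root N ^ (t * m))) = (if n = m then of_nat N else 0)"
proof -
  define w where "w = dft_root N"
  define z where "z = w ^ n / w ^ m"
  have N: "N > 0" using assms by simp
  have unit: "norm (w ^ j) = 1" for j
    by (simp add: w_def norm_power)
  have "w \<noteq> 0"
    using unit [of 1] by auto
  have "w ^ N = 1"
    using dft_root_power_eq_1_iff [OF N, of N] by (simp add: w_def)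
  then have "z ^ N = 1"
    using \<open>w \<noteq> 0\<close> by (simp add: z_def power_divide flip: power_mult) (simp add: mult.commute power_mult)
  moreover have "z = 1 \<longleftrightarrow> n = m"
  proof -
    have "z = 1 \<longleftrightarrow> w ^ n = w ^ m"
      using \<open>w \<noteq> 0\<close> by (simp add: z_def)
    also have "\<dots> \<longleftrightarrow> n = m"
      using assms by (simp add: w_def dft_root_power_eq_iff [OF N])
    finally show ?thesis .
  qed
  moreover have "w ^ (t * n) * cnj (w ^ (t * m)) = z ^ t" for t
  proof -
    have "w ^ (t * n) * cnj (w ^ (t * m)) = w ^ (t * n) / w ^ (t * m)"
      by (rule divide_conv_cnj [OF unit, symmetric])
    also have "\<dots> = z ^ t"
      by (simp add: z_def power_divide mult.commute power_mult)
    finally show ?thesis .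
  qed
  ultimately show ?thesis
    by (simp add: w_def [symmetric] sum_gp_strict)
qed

definition idft :: "nat \<Rightarrow> (nat \<Rightarrow> complex) \<Rightarrow> nat \<Rightarrow> complex" where
  "idft N a t = complex_of_real (1 / sqrt (real N)) * (\<Sum>n<N. a n * dft_root N ^ (t * n))"

lemma ofdm_symbol_eq_idft: "ofdm_symbol N P s = idft N (\<lambda>n. complex_of_real (sqrt (P n)) * s n)"
  by (simp add: fun_eq_iff ofdm_symbol_def idft_def dft_root_power mult.assoc)

lemma idft_mod:
  assumes "N > 0"
  shows "idft N a (t mod N) = idft N a t"
proof -
  have "dft_root N ^ (t mod N * n) = dft_root N ^ (t * n)" for n
    using assms by (simp add: dft_root_power_eq_iff mod_mult_left_eq)
  then show ?thesis by (simp add: idft_def)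
qed

lemma acorr_eq_cyclic_sum:
  assumes "k < N"
  shows "acorr N x k = (\<Sum>i<N. cnj (x i) * x ((i + k) mod N))"
  unfolding acorr_def
proof (rule sum.cong [OF refl])
  fix i assume "i \<in> {..<N}"
  then have "cyc_shift N k i j = (if j = (i + k) mod N then 1 else 0)" if "j < N" for j
    using assms that by (auto simp: cyc_shift_def mod_if)
  then have "(\<Sum>j<N. cnj (x i) * cyc_shift N k i j * x j) =
      (\<Sum>j<N. if j = (i + k) mod N then cnj (x i) * x j else 0)"
    by (intro sum.cong) auto
  then show "(\<Sum>j<N. cnj (x i) * cyc_shift N k i j * x j) = cnj (x i) * x ((i + k) mod N)"
    using assms by simp
qed

lemma acorr_idft:
  assumes "k < N"
  shows "acorr N (idft N a) k = (\<Sum>n<N. complex_of_real ((cmod (a n))\<^sup>2) * dft_root N ^ (k * n))"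
proof -
  define w where "w = dft_root N"
  define c where "c = complex_of_real (1 / sqrt (real N))"
  have N: "N > 0" using assms by simp
  have normalisation: "c * c * of_nat N = 1"
  proof -
    have "c * c * of_nat N = complex_of_real (1 / sqrt (real N) * (1 / sqrt (real N)) * real N)"
      by (simp only: c_def of_real_mult of_real_of_nat_eq)
    also have "1 / sqrt (real N) * (1 / sqrt (real N)) * real N = 1"
      using N by (simp add: power_divide flip: power2_eq_square)
    finally show ?thesis by simp
  qed
  have lag_product: "cnj (idft N a i) * idft N a (i + k) =
      (\<Sum>n<N. \<Sum>m<N. c * c * (cnj (a n) * a m * w ^ (k * m)) * (w ^ (i * m) * cnj (w ^ (i * n))))" for i
  proof -
    have "cnj (idft N a i) = c * (\<Sum>n<N. cnj (a n) * cnj (w ^ (i * n)))"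
      by (simp add: idft_def c_def w_def del: complex_cnj_power)
    moreover have "idft N a (i + k) = c * (\<Sum>m<N. a m * (w ^ (i * m) * w ^ (k * m)))"
      by (simp add: idft_def c_def w_def add_mult_distrib power_add)
    ultimately show ?thesis
      by (subst sum.swap) (simp add: sum_product sum_distrib_left mult_ac del: complex_cnj_power)
  qed
  have "acorr N (idft N a) k = (\<Sum>i<N. cnj (idft N a i) * idft N a (i + k))"
    by (simp add: acorr_eq_cyclic_sum [OF assms] idft_mod [OF N])
  also have "\<dots> = (\<Sum>n<N. \<Sum>m<N. \<Sum>i<N. c * c * (cnj (a n) * a m * w ^ (k * m)) * (w ^ (i * m) * cnj (w ^ (i * n))))"
    unfolding lag_product by (rule trans [OF sum.swap sum.cong [OF refl sum.swap]])
  also have "\<dots> = (\<Sum>n<N. \<Sum>m<N. c * c * (cnj (a n) * a m * w ^ (k * m)) * (if m = n then of_nat N else 0))"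
    by (intro sum.cong refl) (simp add: dft_orthogonality w_def flip: sum_distrib_left del: complex_cnj_power)
  also have "\<dots> = (\<Sum>n<N. c * c * of_nat N * (a n * cnj (a n)) * w ^ (k * n))"
    by (intro sum.cong refl) (simp add: if_distrib [of "\<lambda>x. _ * x"] mult_ac cong: if_cong)
  also have "\<dots> = (\<Sum>n<N. complex_of_real ((cmod (a n))\<^sup>2) * dft_root N ^ (k * n))"
    by (simp add: normalisation w_def flip: complex_norm_square)
  finally show ?thesis .
qed

lemma norm_acorr_idft_le:
  assumes "k < N"
  shows "cmod (acorr N (idft N a) k) \<le> (\<Sum>n<N. (cmod (a n))\<^sup>2)"
  unfolding acorr_idft [OF assms]
  by (rule order_trans [OF norm_sum]) (simp add: norm_mult norm_power)

lemma dft_parseval: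
  "(\<Sum>k<N. (cmod (\<Sum>n<N. b n * dft_root N ^ (k * n)))\<^sup>2) = real N * (\<Sum>n<N. (cmod (b n))\<^sup>2)"
proof -
  define w where "w = dft_root N"
  have "complex_of_real (\<Sum>k<N. (cmod (\<Sum>n<N. b n * w ^ (k * n)))\<^sup>2)
      = (\<Sum>k<N. \<Sum>n<N. \<Sum>m<N. b n * cnj (b m) * (w ^ (k * n) * cnj (w ^ (k * m))))"
    by (simp only: of_real_sum complex_norm_square) (simp add: sum_product mult_ac del: complex_cnj_power)
  also have "\<dots> = (\<Sum>n<N. \<Sum>m<N. \<Sum>k<N. b n * cnj (b m) * (w ^ (k * n) * cnj (w ^ (k * m))))"
    by (rule trans [OF sum.swap sum.cong [OF refl sum.swap]])
  also have "\<dots> = (\<Sum>n<N. \<Sum>m<N. b n * cnj (b m) * (if n = m then of_nat N else 0))"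
    by (intro sum.cong refl) (simp add: dft_orthogonality w_def flip: sum_distrib_left del: complex_cnj_power)
  also have "\<dots> = complex_of_real (real N * (\<Sum>n<N. (cmod (b n))\<^sup>2))"
    by (simp add: if_distrib [of "\<lambda>x. _ * x"] sum_distrib_left mult_ac flip: complex_norm_square cong: if_cong)
  finally show ?thesis
    unfolding w_def of_real_eq_iff .
qed

lemma sidelobe_energy_idft:
  assumes "N > 0"
  shows "(\<Sum>k\<in>{1..N-1}. (cmod (acorr N (idft N a) k))\<^sup>2)
    = real N * (\<Sum>n<N. (cmod (a n)) ^ 4) - (\<Sum>n<N. (cmod (a n))\<^sup>2)\<^sup>2"
proof -
  have "(\<Sum>k<N. (cmod (acorr N (idft N a) k))\<^sup>2) = real N * (\<Sum>n<N. (cmod (a n)) ^ 4)"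
    using dft_parseval [where b = "\<lambda>n. complex_of_real ((cmod (a n))\<^sup>2)"]
    by (simp add: acorr_idft norm_power flip: power_mult)
  moreover have "cmod (acorr N (idft N a) 0) = (\<Sum>n<N. (cmod (a n))\<^sup>2)"
  proof -
    have "acorr N (idft N a) 0 = complex_of_real (\<Sum>n<N. (cmod (a n))\<^sup>2)"
      using assms by (simp add: acorr_idft)
    then show ?thesis
      by (simp only: norm_of_real abs_of_nonneg [OF sum_nonneg [OF zero_le_power2]])
  qed
  moreover have "{..<N} = insert 0 {1..N-1}"
    using assms by auto
  ultimately show ?thesis
    by simp
qed

lemma (in prob_space) indep_vars_square_integrable_imp_integrable:
  fixes X :: "'i \<Rightarrow> 'a \<Rightarrow> real"
  assumes "indep_vars (\<lambda>_. borel) X I" "i \<in> I" "integrable M (\<lambda>\<omega>. (X i \<omega>)\<^sup>2)"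
  shows "integrable M (X i)"
proof (rule square_integrable_imp_integrable)
  show "X i \<in> borel_measurable M"
    using assms(1,2) unfolding indep_vars_def by blast
qed (fact assms(3))

lemma (in prob_space) indep_vars_second_moments:
  fixes X :: "'i \<Rightarrow> 'a \<Rightarrow> real"
  assumes indep: "indep_vars (\<lambda>_. borel) X I"
    and square_integrable: "\<And>i. i \<in> I \<Longrightarrow> integrable M (\<lambda>\<omega>. (X i \<omega>)\<^sup>2)"
    and "i \<in> I" "j \<in> I"
  shows "integrable M (\<lambda>\<omega>. X i \<omega> * X j \<omega>)"
    and "expectation (\<lambda>\<omega>. X i \<omega> * X j \<omega>) =
      (if i = j then expectation (\<lambda>\<omega>. (X i \<omega>)\<^sup>2) else expectation (X i) * expectation (X j))"
proof -
  have integrable: "integrable M (X l)" if "l \<in> I" for l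
    using indep that square_integrable [OF that] by (rule indep_vars_square_integrable_imp_integrable)
  have "integrable M (\<lambda>\<omega>. X i \<omega> * X j \<omega>) \<and>
      expectation (\<lambda>\<omega>. X i \<omega> * X j \<omega>) =
      (if i = j then expectation (\<lambda>\<omega>. (X i \<omega>)\<^sup>2) else expectation (X i) * expectation (X j))"
  proof (cases "i = j")
    case True
    then show ?thesis
      using square_integrable [OF \<open>i \<in> I\<close>] by (simp add: power2_eq_square)
  next
    case False
    have pair_indep: "indep_vars (\<lambda>_. borel) X {i, j}"
      using indep by (rule indep_vars_subset) (simp add: \<open>i \<in> I\<close> \<open>j \<in> I\<close>)
    have pair_integrable: "integrable M (X l)" if "l \<in> {i, j}" for l
      using that \<open>i \<in> I\<close> \<open>j \<in> I\<close> integrable by blast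
    have "integrable M (\<lambda>\<omega>. \<Prod>l\<in>{i, j}. X l \<omega>)"
      by (rule indep_vars_integrable [OF _ pair_indep pair_integrable]) simp_all
    moreover have "expectation (\<lambda>\<omega>. \<Prod>l\<in>{i, j}. X l \<omega>) = (\<Prod>l\<in>{i, j}. expectation (X l))"
      by (rule indep_vars_lebesgue_integral [OF _ pair_indep pair_integrable]) simp_all
    ultimately show ?thesis
      using False by simp
  qed
  then show "integrable M (\<lambda>\<omega>. X i \<omega> * X j \<omega>)"
    and "expectation (\<lambda>\<omega>. X i \<omega> * X j \<omega>) =
      (if i = j then expectation (\<lambda>\<omega>. (X i \<omega>)\<^sup>2) else expectation (X i) * expectation (X j))"
    by simp_all
qed

lemma (in prob_space) indep_vars_square_sum:
  fixes X :: "'i \<Rightarrow> 'a \<Rightarrow> real"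
  assumes "finite I"
    and indep: "indep_vars (\<lambda>_. borel) X I"
    and square_integrable: "\<And>i. i \<in> I \<Longrightarrow> integrable M (\<lambda>\<omega>. (X i \<omega>)\<^sup>2)"
  shows "integrable M (\<lambda>\<omega>. (\<Sum>i\<in>I. X i \<omega>)\<^sup>2)"
    and "expectation (\<lambda>\<omega>. (\<Sum>i\<in>I. X i \<omega>)\<^sup>2) =
      (\<Sum>i\<in>I. expectation (X i))\<^sup>2 + (\<Sum>i\<in>I. variance (X i))"
proof -
  have product_integrable: "integrable M (\<lambda>\<omega>. X i \<omega> * X j \<omega>)"
    if "i \<in> I" "j \<in> I" for i j
    using square_integrable that by (rule indep_vars_second_moments(1) [OF indep])
  have product_expectation: "expectation (\<lambda>\<omega>. X i \<omega> * X j \<omega>) =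
      (if i = j then expectation (\<lambda>\<omega>. (X i \<omega>)\<^sup>2) else expectation (X i) * expectation (X j))"
    if "i \<in> I" "j \<in> I" for i j
    using square_integrable that by (rule indep_vars_second_moments(2) [OF indep])
  have square_sum: "(\<Sum>i\<in>I. X i \<omega>)\<^sup>2 = (\<Sum>i\<in>I. \<Sum>j\<in>I. X i \<omega> * X j \<omega>)" for \<omega>
    by (simp add: power2_eq_square sum_product)
  show "integrable M (\<lambda>\<omega>. (\<Sum>i\<in>I. X i \<omega>)\<^sup>2)"
    unfolding square_sum
  proof (rule Bochner_Integration.integrable_sum)
    fix i assume "i \<in> I"
    show "integrable M (\<lambda>\<omega>. \<Sum>j\<in>I. X i \<omega> * X j \<omega>)"
      by (rule Bochner_Integration.integrable_sum) (rule product_integrable [OF \<open>i \<in> I\<close>])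
  qed
  have variance: "variance (X i) = expectation (\<lambda>\<omega>. (X i \<omega>)\<^sup>2) - (expectation (X i))\<^sup>2"
    if "i \<in> I" for i
    using indep_vars_square_integrable_imp_integrable [OF indep that square_integrable [OF that]]
      square_integrable [OF that]
    by (rule variance_eq)
  have "expectation (\<lambda>\<omega>. (\<Sum>i\<in>I. X i \<omega>)\<^sup>2) =
      (\<Sum>i\<in>I. expectation (\<lambda>\<omega>. \<Sum>j\<in>I. X i \<omega> * X j \<omega>))"
    unfolding square_sum
    by (intro Bochner_Integration.integral_sum Bochner_Integration.integrable_sum product_integrable)
  also have "\<dots> = (\<Sum>i\<in>I. \<Sum>j\<in>I. expectation (\<lambda>\<omega>. X i \<omega> * X j \<omega>))"
    by (intro sum.cong refl Bochner_Integration.integral_sum product_integrable)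
  also have "\<dots> = (\<Sum>i\<in>I. \<Sum>j\<in>I. expectation (X i) * expectation (X j) +
      (if i = j then variance (X i) else 0))"
    by (intro sum.cong refl) (simp add: product_expectation variance, simp add: power2_eq_square)
  also have "\<dots> = (\<Sum>i\<in>I. expectation (X i))\<^sup>2 + (\<Sum>i\<in>I. variance (X i))"
    using \<open>finite I\<close> by (simp add: sum.distrib power2_eq_square sum_product)
  finally show "expectation (\<lambda>\<omega>. (\<Sum>i\<in>I. X i \<omega>)\<^sup>2) =
      (\<Sum>i\<in>I. expectation (X i))\<^sup>2 + (\<Sum>i\<in>I. variance (X i))" .
qed

lemma norm_of_real_sqrt_mult_square:
  assumes "p \<ge> 0"
  shows "(cmod (complex_of_real (sqrt p) * z))\<^sup>2 = p * (cmod z)\<^sup>2"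
  using assms by (simp add: norm_mult power_mult_distrib)

lemma acorr_ofdm_symbol:
  assumes "k < N" "\<And>n. n < N \<Longrightarrow> P n \<ge> 0"
  shows "acorr N (ofdm_symbol N P s) k = (\<Sum>n<N. complex_of_real (P n * (cmod (s n))\<^sup>2) * dft_root N ^ (k * n))"
  using assms by (simp add: ofdm_symbol_eq_idft acorr_idft norm_of_real_sqrt_mult_square)

lemma norm_acorr_ofdm_symbol_le:
  assumes "k < N" "\<And>n. n < N \<Longrightarrow> P n \<ge> 0"
  shows "cmod (acorr N (ofdm_symbol N P s) k) \<le> (\<Sum>n<N. P n * (cmod (s n))\<^sup>2)"
  using norm_acorr_idft_le [OF assms(1), where a = "\<lambda>n. complex_of_real (sqrt (P n)) * s n"] assms(2)
  by (simp add: ofdm_symbol_eq_idft norm_of_real_sqrt_mult_square)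

lemma sidelobe_energy_ofdm_symbol:
  assumes "N > 0" "\<And>n. n < N \<Longrightarrow> P n \<ge> 0"
  shows "(\<Sum>k\<in>{1..N-1}. (cmod (acorr N (ofdm_symbol N P s) k))\<^sup>2)
    = real N * (\<Sum>n<N. (P n)\<^sup>2 * (cmod (s n)) ^ 4) - (\<Sum>n<N. P n * (cmod (s n))\<^sup>2)\<^sup>2"
proof -
  have "(cmod (complex_of_real (sqrt (P n)) * s n)) ^ 4 = (P n)\<^sup>2 * (cmod (s n)) ^ 4" if "n < N" for n
  proof -
    have "(cmod (complex_of_real (sqrt (P n)) * s n)) ^ 4 = ((cmod (complex_of_real (sqrt (P n)) * s n))\<^sup>2)\<^sup>2"
      by (simp flip: power_mult)
    also have "\<dots> = (P n)\<^sup>2 * (cmod (s n)) ^ 4"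
      by (simp add: norm_of_real_sqrt_mult_square [OF assms(2) [OF that]] power_mult_distrib flip: power_mult)
    finally show ?thesis .
  qed
  then show ?thesis
    using sidelobe_energy_idft [OF assms(1)] assms(2)
    by (simp add: ofdm_symbol_eq_idft norm_of_real_sqrt_mult_square)
qed

lemma integrable_square_norm_acorr_ofdm_symbol:
  assumes "k < N"
    and measurable [measurable]: "\<And>n. n < N \<Longrightarrow> s n \<in> borel_measurable M"
    and "integrable M (\<lambda>\<omega>. (\<Sum>n<N. P n * (cmod (s n \<omega>))\<^sup>2)\<^sup>2)"
    and "\<And>n. n < N \<Longrightarrow> P n \<ge> 0"
  shows "integrable M (\<lambda>\<omega>. (cmod (acorr N (ofdm_symbol N P (\<lambda>n. s n \<omega>)) k))\<^sup>2)"
proof (rule Bochner_Integration.integrable_bound [OF assms(3)])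
  have "(\<lambda>\<omega>. (cmod (\<Sum>n<N. complex_of_real (P n * (cmod (s n \<omega>))\<^sup>2) * dft_root N ^ (k * n)))\<^sup>2)
      \<in> borel_measurable M"
    by measurable
  then show "(\<lambda>\<omega>. (cmod (acorr N (ofdm_symbol N P (\<lambda>n. s n \<omega>)) k))\<^sup>2) \<in> borel_measurable M"
    using assms(1,4) by (simp add: acorr_ofdm_symbol)
  show "AE \<omega> in M. norm ((cmod (acorr N (ofdm_symbol N P (\<lambda>n. s n \<omega>)) k))\<^sup>2)
      \<le> norm ((\<Sum>n<N. P n * (cmod (s n \<omega>))\<^sup>2)\<^sup>2)"
    using norm_acorr_ofdm_symbol_le [OF assms(1,4)] by (auto intro!: power_mono)
qed

lemma (in prob_space) weighted_power_sum_second_moment: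
  fixes s :: "'i \<Rightarrow> 'a \<Rightarrow> complex" and P :: "'i \<Rightarrow> real"
  assumes "finite I"
    and indep: "indep_vars (\<lambda>_. borel) s I"
    and fourth_moment: "\<And>n. n \<in> I \<Longrightarrow> integrable M (\<lambda>\<omega>. (cmod (s n \<omega>)) ^ 4)"
    and unit_power: "\<And>n. n \<in> I \<Longrightarrow> expectation (\<lambda>\<omega>. (cmod (s n \<omega>))\<^sup>2) = 1"
  shows "integrable M (\<lambda>\<omega>. (\<Sum>n\<in>I. P n * (cmod (s n \<omega>))\<^sup>2)\<^sup>2)"
    and "expectation (\<lambda>\<omega>. (\<Sum>n\<in>I. P n * (cmod (s n \<omega>))\<^sup>2)\<^sup>2) =
      (\<Sum>n\<in>I. P n)\<^sup>2 + (\<Sum>n\<in>I. (P n)\<^sup>2 * (expectation (\<lambda>\<omega>. (cmod (s n \<omega>)) ^ 4) - 1))"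
proof -
  define Y where "Y = (\<lambda>n \<omega>. P n * (cmod (s n \<omega>))\<^sup>2)"
  have Y_indep: "indep_vars (\<lambda>_. borel) Y I"
    unfolding Y_def using indep
    by (rule indep_vars_compose2 [where Y = "\<lambda>n z. P n * (cmod z)\<^sup>2"]) measurable
  have Y_square: "(Y n \<omega>)\<^sup>2 = (P n)\<^sup>2 * (cmod (s n \<omega>)) ^ 4" for n \<omega>
    by (simp add: Y_def power_mult_distrib flip: power_mult)
  have Y_square_integrable: "integrable M (\<lambda>\<omega>. (Y n \<omega>)\<^sup>2)" if "n \<in> I" for n
    unfolding Y_square using fourth_moment [OF that] by simp
  have Y_mean: "expectation (Y n) = P n" if "n \<in> I" for n
    using unit_power [OF that] by (simp add: Y_def)
  have Y_variance: "variance (Y n) = (P n)\<^sup>2 * (expectation (\<lambda>\<omega>. (cmod (s n \<omega>)) ^ 4) - 1)"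
    if "n \<in> I" for n
  proof -
    have "integrable M (Y n)"
      using Y_indep that Y_square_integrable [OF that] by (rule indep_vars_square_integrable_imp_integrable)
    then have "variance (Y n) = expectation (\<lambda>\<omega>. (Y n \<omega>)\<^sup>2) - (expectation (Y n))\<^sup>2"
      using Y_square_integrable [OF that] by (rule variance_eq)
    then show ?thesis
      using that by (simp add: Y_square Y_mean algebra_simps)
  qed
  note square_sum = indep_vars_square_sum [OF \<open>finite I\<close> Y_indep Y_square_integrable]
  show "integrable M (\<lambda>\<omega>. (\<Sum>n\<in>I. P n * (cmod (s n \<omega>))\<^sup>2)\<^sup>2)"
    using square_sum(1) by (simp add: Y_def)
  have "(\<Sum>n\<in>I. expectation (Y n)) = (\<Sum>n\<in>I. P n)"
    by (intro sum.cong refl Y_mean)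
  moreover have "(\<Sum>n\<in>I. variance (Y n)) =
      (\<Sum>n\<in>I. (P n)\<^sup>2 * (expectation (\<lambda>\<omega>. (cmod (s n \<omega>)) ^ 4) - 1))"
    by (intro sum.cong refl Y_variance)
  ultimately show "expectation (\<lambda>\<omega>. (\<Sum>n\<in>I. P n * (cmod (s n \<omega>))\<^sup>2)\<^sup>2) =
      (\<Sum>n\<in>I. P n)\<^sup>2 + (\<Sum>n\<in>I. (P n)\<^sup>2 * (expectation (\<lambda>\<omega>. (cmod (s n \<omega>)) ^ 4) - 1))"
    using square_sum(2) by (simp only: Y_def)
qed

theorem proposition1:
  fixes M :: "'a measure" and N :: nat
    and s :: "nat \<Rightarrow> 'a \<Rightarrow> complex" and P :: "nat \<Rightarrow> real"
  assumes "prob_space M"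
    and "N \<ge> 2"
    and "prob_space.indep_vars M (\<lambda>_. borel) s {..<N}"
    and "\<And>n. n < N \<Longrightarrow> integrable M (\<lambda>\<omega>. (cmod (s n \<omega>)) ^ 4)"
    and "\<And>n. n < N \<Longrightarrow> integral\<^sup>L M (s n) = 0"
    and "\<And>n. n < N \<Longrightarrow> integral\<^sup>L M (\<lambda>\<omega>. (cmod (s n \<omega>))\<^sup>2) = 1"
    and "\<And>n. n < N \<Longrightarrow> P n \<ge> 0"
  shows "(1 / (real N - 1)) *
           (\<Sum>k\<in>{1..N-1}. integral\<^sup>L M
              (\<lambda>\<omega>. (cmod (acorr N (ofdm_symbol N P (\<lambda>n. s n \<omega>)) k))\<^sup>2))
         = (1 / (real N - 1)) *
           ((\<Sum>n<N. ((real N - 1) * integral\<^sup>L M (\<lambda>\<omega>. (cmod (s n \<omega>)) ^ 4) + 1) * (P n)\<^sup>2)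
             - (\<Sum>n<N. P n)\<^sup>2)"
proof -
  interpret prob_space M by fact
  have N: "N > 0" using assms(2) by simp
  define \<mu> where "\<mu> n = expectation (\<lambda>\<omega>. (cmod (s n \<omega>)) ^ 4)" for n
  define Y where "Y = (\<lambda>\<omega>. \<Sum>n<N. P n * (cmod (s n \<omega>))\<^sup>2)"
  have power_sum: "integrable M (\<lambda>\<omega>. (Y \<omega>)\<^sup>2)"
    "expectation (\<lambda>\<omega>. (Y \<omega>)\<^sup>2) = (\<Sum>n<N. P n)\<^sup>2 + (\<Sum>n<N. (P n)\<^sup>2 * (\<mu> n - 1))"
    using weighted_power_sum_second_moment [where P = P, OF _ assms(3)] assms(4,6)
    by (simp_all add: Y_def \<mu>_def)
  have acorr_integrable: "integrable M (\<lambda>\<omega>. (cmod (acorr N (ofdm_symbol N P (\<lambda>n. s n \<omega>)) k))\<^sup>2)"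
    if "k < N" for k
    using assms(3) power_sum(1) assms(7)
    by (intro integrable_square_norm_acorr_ofdm_symbol [OF that]) (auto simp: indep_vars_def Y_def)
  have "(\<Sum>k\<in>{1..N-1}. expectation (\<lambda>\<omega>. (cmod (acorr N (ofdm_symbol N P (\<lambda>n. s n \<omega>)) k))\<^sup>2))
      = expectation (\<lambda>\<omega>. \<Sum>k\<in>{1..N-1}. (cmod (acorr N (ofdm_symbol N P (\<lambda>n. s n \<omega>)) k))\<^sup>2)"
    by (rule Bochner_Integration.integral_sum [symmetric]) (use acorr_integrable in auto)
  also have "\<dots> = expectation (\<lambda>\<omega>. real N * (\<Sum>n<N. (P n)\<^sup>2 * (cmod (s n \<omega>)) ^ 4) - (Y \<omega>)\<^sup>2)"
    by (simp only: Y_def sidelobe_energy_ofdm_symbol [OF N assms(7)])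
  also have "\<dots> = real N * (\<Sum>n<N. (P n)\<^sup>2 * \<mu> n) - expectation (\<lambda>\<omega>. (Y \<omega>)\<^sup>2)"
    using assms(4) power_sum(1) by (subst Bochner_Integration.integral_diff) (auto simp: \<mu>_def)
  also have "\<dots> = (\<Sum>n<N. ((real N - 1) * \<mu> n + 1) * (P n)\<^sup>2) - (\<Sum>n<N. P n)\<^sup>2"
    using assms(4,6) by (simp add: power_sum(2) \<mu>_def sum_distrib_left sum_subtractf sum.distrib algebra_simps)
  finally show ?thesis
    by (simp add: \<mu>_def)
qed

end
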